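(* Let $\mathbf{a}=\{a_i\}_{i\ge1}$ and $\mathbf{b}=\{b_i\}_{i\ge1}$ be elements of $\mathbf{C}$ and let $K,L\in(0,\infty)$. If the metric spaces $(\Upsilon, K\cdot R[\mathbf{a}])$ and $(\Upsilon, L\cdot R[\mathbf{b}])$ are isometric, then $\mathbf{a}=\mathbf{b}$.
   Context: $\mathbf{C}=\prod_{i=1}^\infty[2^{-2i},2^{-2i+1}]$, a set of sequences $\mathbf{a}=\{a_i\}_{i\ge1}$; for $\mathbf{a}\in\mathbf{C}$ one sets additionally $a_0=1$. $\Upsilon=\{(0,0)\}\cup\big((0,1]\times\mathbb{Z}_{\ge0}\big)$, and an element $(s,i)$ is written $s_i$ (so $0_0=(0,0)$). For $\mathbf{a}\in\mathbf{C}$, the metric $R[\mathbf{a}]$ on $\Upsilon$ is $R[\mathbf{a}](s_i,t_j)=a_i|s-t|$ if $i=j$ and $R[\mathbf{a}](s_i,t_j)=a_is+a_jt$ if $i\ne j$ (a compact metric tree with edges of lengths $a_i$ glued at $0_0$). *)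

theory Defs
  imports Complex_Main
begin

text \<open>The set C of sequences; a sequence is a function nat => real with the
  convention a 0 = 1 built in, and 2^(-2i) <= a i <= 2^(-2i+1) for i >= 1.\<close>
definition seqC :: "(nat \<Rightarrow> real) set" where
  "seqC = {a. a 0 = 1 \<and> (\<forall>i\<ge>1. (2::real) powi (- 2 * int i) \<le> a i \<and> a i \<le> (2::real) powi (- 2 * int i + 1))}"

text \<open>Upsilon: the point (0,0) together with (0,1] x Z_{>=0}; s_i is the pair (s,i).\<close>
definition Upsilon :: "(real \<times> nat) set" where
  "Upsilon = {(0, 0)} \<union> ({0<..1} \<times> UNIV)"

definition R :: "(nat \<Rightarrow> real) \<Rightarrow> real \<times> nat \<Rightarrow> real \<times> nat \<Rightarrow> real" where
  "R a p q = (if snd p = snd q then a (snd p) * \<bar>fst p - fst q\<bar>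
              else a (snd p) * fst p + a (snd q) * fst q)"

definition isometric_spaces :: "'a set \<Rightarrow> ('a \<Rightarrow> 'a \<Rightarrow> real) \<Rightarrow> 'b set \<Rightarrow> ('b \<Rightarrow> 'b \<Rightarrow> real) \<Rightarrow> bool" where
  "isometric_spaces X d Y e \<longleftrightarrow>
     (\<exists>f. bij_betw f X Y \<and> (\<forall>x\<in>X. \<forall>y\<in>X. e (f x) (f y) = d x y))"

end

theory Submission
  imports Defs
begin

text \<open>In the tree \<open>R[a]\<close> the centre
  \<open>0\<^sub>0\<close> is the only point lying between each two of some three other points, and, seen from
  the centre, the endpoints \<open>1\<^sub>i\<close> are exactly the points beyond which no geodesic can be
  prolonged. Both notions survive isometries and rescaling, so an isometry of \<open>(\<Upsilon>, K R[a])\<close>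
  onto \<open>(\<Upsilon>, L R[b])\<close> fixes the centre and maps endpoints to endpoints; hence every \<open>K a\<^sub>i\<close>
  equals some \<open>L b\<^sub>j\<close> and vice versa. Since \<open>a\<^sub>0 = b\<^sub>0 = 1\<close> is the largest edge length on
  both sides, \<open>K = L\<close>; and since the intervals \<open>[4\<^sup>-\<^sup>i, 2\<cdot>4\<^sup>-\<^sup>i]\<close> are pairwise disjoint,
  \<open>a\<^sub>i = b\<^sub>j\<close> forces \<open>i = j\<close>.\<close>

definition metric_between :: "('a \<Rightarrow> 'a \<Rightarrow> real) \<Rightarrow> 'a \<Rightarrow> 'a \<Rightarrow> 'a \<Rightarrow> bool" where
  "metric_between d x y z \<longleftrightarrow> d x z = d x y + d y z"

definition branch_point :: "'a set \<Rightarrow> ('a \<Rightarrow> 'a \<Rightarrow> real) \<Rightarrow> 'a \<Rightarrow> bool" where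
  "branch_point X d x \<longleftrightarrow> x \<in> X \<and>
     (\<exists>y1\<in>X. \<exists>y2\<in>X. \<exists>y3\<in>X. y1 \<noteq> x \<and> y2 \<noteq> x \<and> y3 \<noteq> x \<and>
        metric_between d y1 x y2 \<and> metric_between d y1 x y3 \<and> metric_between d y2 x y3)"

definition terminal_point :: "'a set \<Rightarrow> ('a \<Rightarrow> 'a \<Rightarrow> real) \<Rightarrow> 'a \<Rightarrow> 'a \<Rightarrow> bool" where
  "terminal_point X d c x \<longleftrightarrow> x \<in> X \<and> (\<forall>y\<in>X. metric_between d c x y \<longrightarrow> y = x)"

lemma metric_between_similarity:
  assumes "\<forall>x\<in>X. \<forall>y\<in>X. e (f x) (f y) = c * d x y" and "c \<noteq> 0"
    and "x \<in> X" "y \<in> X" "z \<in> X"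
  shows "metric_between e (f x) (f y) (f z) \<longleftrightarrow> metric_between d x y z"
  using assms by (simp add: metric_between_def flip: distrib_left)

lemma branch_point_similarity:
  assumes "inj_on f X" "f ` X \<subseteq> Y"
    and sim: "\<forall>x\<in>X. \<forall>y\<in>X. e (f x) (f y) = c * d x y" "c \<noteq> 0"
    and "branch_point X d x"
  shows "branch_point Y e (f x)"
proof -
  obtain y1 y2 y3 where y: "y1 \<in> X" "y2 \<in> X" "y3 \<in> X" "y1 \<noteq> x" "y2 \<noteq> x" "y3 \<noteq> x"
    and between: "metric_between d y1 x y2" "metric_between d y1 x y3" "metric_between d y2 x y3"
    and x: "x \<in> X"
    using \<open>branch_point X d x\<close> unfolding branch_point_def by blast
  have "f y1 \<noteq> f x" "f y2 \<noteq> f x" "f y3 \<noteq> f x"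
    using y x \<open>inj_on f X\<close> by (auto dest: inj_onD)
  moreover have "metric_between e (f y1) (f x) (f y2)" "metric_between e (f y1) (f x) (f y3)"
    "metric_between e (f y2) (f x) (f y3)"
    using between y x metric_between_similarity[of X e f c d] sim by auto
  ultimately show ?thesis
    using y x \<open>f ` X \<subseteq> Y\<close> unfolding branch_point_def by blast
qed

lemma terminal_point_similarity:
  assumes f: "bij_betw f X Y"
    and sim: "\<forall>x\<in>X. \<forall>y\<in>X. e (f x) (f y) = c * d x y" "c \<noteq> 0"
    and "p \<in> X" "terminal_point X d p x"
  shows "terminal_point Y e (f p) (f x)"
  unfolding terminal_point_def
proof (intro conjI ballI impI)
  have x: "x \<in> X" and maximal: "\<forall>y\<in>X. metric_between d p x y \<longrightarrow> y = x"
    using \<open>terminal_point X d p x\<close> unfolding terminal_point_def by blast+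
  show "f x \<in> Y"
    using f x by (rule bij_betw_apply)
  fix y
  assume "y \<in> Y" and between: "metric_between e (f p) (f x) y"
  then obtain y' where y': "y' \<in> X" "y = f y'"
    using f by (auto simp: bij_betw_def)
  have "metric_between d p x y'"
    using between y' x \<open>p \<in> X\<close> metric_between_similarity[of X e f c d] sim by simp
  then show "y = f x"
    using maximal y' by auto
qed

lemma isometric_spaces_sym:
  assumes "isometric_spaces X d Y e"
  shows "isometric_spaces Y e X d"
proof -
  obtain f where f: "bij_betw f X Y" and iso: "\<forall>x\<in>X. \<forall>y\<in>X. e (f x) (f y) = d x y"
    using assms unfolding isometric_spaces_def by blast
  let ?g = "inv_into X f"
  have "bij_betw ?g Y X"
    using f by (rule bij_betw_inv_into)
  moreover have "d (?g x) (?g y) = e x y" if "x \<in> Y" "y \<in> Y" for x y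
    using that f iso bij_betw_inv_into_right[OF f] bij_betwE[OF \<open>bij_betw ?g Y X\<close>] by metis
  ultimately show ?thesis
    unfolding isometric_spaces_def by blast
qed

lemma mem_Upsilon_iff: "p \<in> Upsilon \<longleftrightarrow> p = (0, 0) \<or> (0 < fst p \<and> fst p \<le> 1)"
  by (cases p) (auto simp: Upsilon_def)

lemma R_centre: "0 \<le> t \<Longrightarrow> R a (0, 0) (t, j) = a j * t"
  by (auto simp: R_def)

text \<open>\<open>j = i \<and> s < t\<close> says that \<open>t\<^sub>j\<close> lies beyond \<open>s\<^sub>i\<close>, on the far side from the centre:
  a point between two others separates them.\<close>

lemma R_between_separates:
  fixes a :: "nat \<Rightarrow> real"
  assumes pos: "\<And>k. a k > 0" and s: "0 < s" and t: "0 \<le> t" and u: "0 \<le> u"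
    and ny: "(t, j) \<noteq> (s, i)" and nz: "(u, k) \<noteq> (s, i)"
    and "metric_between (R a) (t, j) (s, i) (u, k)"
  shows "(j = i \<and> s < t) \<noteq> (k = i \<and> s < u)"
proof
  assume same_side: "(j = i \<and> s < t) = (k = i \<and> s < u)"
  have B: "R a (t, j) (u, k) = R a (t, j) (s, i) + R a (s, i) (u, k)"
    using \<open>metric_between (R a) (t, j) (s, i) (u, k)\<close> unfolding metric_between_def .
  have ai: "a i > 0" "a i * s > 0" using pos[of i] s by simp_all
  have ajk: "a j * t \<ge> 0" "a k * u \<ge> 0" using pos[of j] pos[of k] t u by simp_all
  consider "j = i" "k = i" | "j = i" "k \<noteq> i" | "j \<noteq> i" "k = i" | "j \<noteq> i" "k \<noteq> i"
    by blast
  then show False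
  proof cases
    case 1
    with B have "\<bar>t - u\<bar> = \<bar>t - s\<bar> + \<bar>s - u\<bar>"
      using ai by (simp add: R_def flip: distrib_left)
    then show False using same_side 1 ny nz by (auto simp: abs_if split: if_splits)
  next
    case 2
    with B have "t = \<bar>t - s\<bar> + s" using ai by (simp add: R_def flip: distrib_left)
    then show False using same_side 2 ny t by (auto simp: abs_if split: if_splits)
  next
    case 3
    with B have "u = s + \<bar>s - u\<bar>" using ai by (simp add: R_def flip: distrib_left)
    then show False using same_side 3 nz u by (auto simp: abs_if split: if_splits)
  next
    case 4
    have "a j * \<bar>t - u\<bar> \<le> a j * t + a j * u"
      using pos[of j] t u by (simp add: mult_left_mono flip: distrib_left)
    then show False using B 4 ai ajk by (auto simp: R_def mult.commute split: if_splits)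
  qed
qed

lemma R_branch_point_iff:
  fixes a :: "nat \<Rightarrow> real"
  assumes pos: "\<And>k. a k > 0"
  shows "branch_point Upsilon (R a) x \<longleftrightarrow> x = (0, 0)"
proof
  assume "branch_point Upsilon (R a) x"
  then obtain y1 y2 y3 where y: "y1 \<in> Upsilon" "y2 \<in> Upsilon" "y3 \<in> Upsilon"
      "y1 \<noteq> x" "y2 \<noteq> x" "y3 \<noteq> x"
    and between: "metric_between (R a) y1 x y2" "metric_between (R a) y1 x y3"
      "metric_between (R a) y2 x y3"
    and x: "x \<in> Upsilon"
    unfolding branch_point_def by blast
  show "x = (0, 0)"
  proof (rule ccontr)
    assume "x \<noteq> (0, 0)"
    then obtain s i where xs: "x = (s, i)" and s: "0 < s"
      using x by (cases x) (auto simp: mem_Upsilon_iff)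
    define beyond where "beyond p \<longleftrightarrow> snd p = i \<and> s < fst p" for p :: "real \<times> nat"
    have "beyond y \<noteq> beyond z"
      if "y \<in> Upsilon" "z \<in> Upsilon" "y \<noteq> x" "z \<noteq> x" "metric_between (R a) y x z" for y z
    proof -
      obtain t j u k where yz: "y = (t, j)" "z = (u, k)" by (cases y, cases z)
      have "0 \<le> t" "0 \<le> u" using that(1,2) yz by (auto simp: mem_Upsilon_iff)
      then show ?thesis
        using that(3-5) unfolding yz xs beyond_def
        by (intro R_between_separates[OF pos s]) simp_all
    qed
    then show False
      using y between by blast
  qed
next
  assume x: "x = (0, 0)"
  have edges: "(1, k) \<in> Upsilon" "(1, k) \<noteq> x" for k
    using x by (simp_all add: mem_Upsilon_iff)
  have "metric_between (R a) (1, k) x (1, m)" if "k \<noteq> m" for k m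
    using that x by (simp add: metric_between_def R_def)
  then have "metric_between (R a) (1, 0) x (1, 1)" "metric_between (R a) (1, 0) x (1, 2)"
    "metric_between (R a) (1, 1) x (1, 2)"
    by simp_all
  moreover have "x \<in> Upsilon" using x by (simp add: mem_Upsilon_iff)
  ultimately show "branch_point Upsilon (R a) x"
    unfolding branch_point_def using edges by blast
qed

lemma R_terminal_point_iff:
  fixes a :: "nat \<Rightarrow> real"
  assumes pos: "\<And>k. a k > 0"
  shows "terminal_point Upsilon (R a) (0, 0) x \<longleftrightarrow> (\<exists>i. x = (1, i))"
proof
  assume terminal: "terminal_point Upsilon (R a) (0, 0) x"
  obtain t j where x: "x = (t, j)" by (cases x)
  have t: "0 \<le> t" "t \<le> 1"
    using terminal x by (auto simp: terminal_point_def mem_Upsilon_iff)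
  have "metric_between (R a) (0, 0) x (1, j)"
    using t x by (simp add: metric_between_def R_def algebra_simps)
  then have "(1, j) = x"
    using terminal by (auto simp: terminal_point_def mem_Upsilon_iff)
  then show "\<exists>i. x = (1, i)" by blast
next
  assume "\<exists>i. x = (1, i)"
  then obtain i where x: "x = (1, i)" ..
  have "y = (1, i)" if "y \<in> Upsilon" and between: "metric_between (R a) (0, 0) (1, i) y" for y
  proof -
    obtain t k where y: "y = (t, k)" by (cases y)
    have t: "0 \<le> t" "t \<le> 1" using that y by (auto simp: mem_Upsilon_iff)
    have E: "a k * t = a i + R a (1, i) (t, k)"
      using between y R_centre[OF t(1)] R_centre[of 1] by (simp add: metric_between_def)
    show ?thesis
    proof (cases "k = i")
      case True
      with E have "a i * t = a i * (1 + \<bar>1 - t\<bar>)" by (simp add: R_def distrib_left)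
      then have "t = 1 + \<bar>1 - t\<bar>" using pos[of i] by simp
      then show ?thesis using t y True by simp
    next
      case False
      with E have "a k * t = a i + (a i + a k * t)" by (simp add: R_def)
      then show ?thesis using pos[of i] by simp
    qed
  qed
  then show "terminal_point Upsilon (R a) (0, 0) x"
    using x by (simp add: terminal_point_def mem_Upsilon_iff)
qed

lemma isometric_trees_edge_lengths:
  fixes a b :: "nat \<Rightarrow> real" and K L :: real
  assumes pos: "\<And>k. a k > 0" "\<And>k. b k > 0" and "K > 0" "L > 0"
    and "isometric_spaces Upsilon (\<lambda>p q. K * R a p q) Upsilon (\<lambda>p q. L * R b p q)"
  shows "\<exists>j. K * a i = L * b j"
proof -
  obtain f where f: "bij_betw f Upsilon Upsilon"
    and iso: "\<forall>x\<in>Upsilon. \<forall>y\<in>Upsilon. L * R b (f x) (f y) = K * R a x y"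
    using assms(5) unfolding isometric_spaces_def by blast
  have sim: "\<forall>x\<in>Upsilon. \<forall>y\<in>Upsilon. R b (f x) (f y) = K / L * R a x y"
  proof (intro ballI)
    fix x y
    assume "x \<in> Upsilon" "y \<in> Upsilon"
    then have "L * R b (f x) (f y) = K * R a x y" by (rule iso[rule_format])
    then show "R b (f x) (f y) = K / L * R a x y" using \<open>L > 0\<close> by (simp add: field_simps)
  qed
  have ratio: "K / L \<noteq> 0" using \<open>K > 0\<close> \<open>L > 0\<close> by simp
  have centre: "(0, 0) \<in> Upsilon" and edge: "(1, i) \<in> Upsilon"
    by (simp_all add: mem_Upsilon_iff)
  have "branch_point Upsilon (R a) (0, 0)"
    using R_branch_point_iff[OF pos(1)] by simp
  then have "branch_point Upsilon (R b) (f (0, 0))"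
    by (rule branch_point_similarity[OF bij_betw_imp_inj_on[OF f]
          equalityD1[OF bij_betw_imp_surj_on[OF f]] sim ratio])
  then have fixes_centre: "f (0, 0) = (0, 0)"
    by (rule R_branch_point_iff[OF pos(2), THEN iffD1])
  have "terminal_point Upsilon (R a) (0, 0) (1, i)"
    unfolding R_terminal_point_iff[OF pos(1)] by blast
  then have "terminal_point Upsilon (R b) (f (0, 0)) (f (1, i))"
    by (rule terminal_point_similarity[OF f sim ratio centre])
  then obtain j where fj: "f (1, i) = (1, j)"
    unfolding fixes_centre R_terminal_point_iff[OF pos(2)] by blast
  have "L * R b (f (0, 0)) (f (1, i)) = K * R a (0, 0) (1, i)"
    using iso[rule_format, OF centre edge] .
  then have "L * b j = K * a i"
    unfolding fixes_centre fj R_centre[OF zero_le_one] by simp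
  then show ?thesis by (intro exI[of _ j]) simp
qed

lemma seqC_bounds:
  assumes "a \<in> seqC"
  shows "1 \<le> a i * 4 ^ i \<and> a i * 4 ^ i \<le> 2"
proof (cases "i = 0")
  case True
  then show ?thesis using assms by (simp add: seqC_def)
next
  case False
  have lower: "(2::real) powi (- 2 * int i) = 1 / 4 ^ i"
    by (simp add: power_int_def nat_mult_distrib power_mult power_one_over)
  have "(2::real) powi (- 2 * int i + 1) = 2 powi (- 2 * int i) * 2 powi 1"
    by (rule power_int_add) simp
  then have upper: "(2::real) powi (- 2 * int i + 1) = 2 / 4 ^ i"
    using lower by simp
  have "1 / 4 ^ i \<le> a i \<and> a i \<le> 2 / 4 ^ i"
    using assms False unfolding seqC_def lower [symmetric] upper [symmetric] by simp
  then show ?thesis by (simp add: field_simps)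
qed

lemma seqC_pos:
  assumes "a \<in> seqC"
  shows "a k > 0"
proof -
  have "0 < a k * 4 ^ k"
    using seqC_bounds[OF assms, of k] by linarith
  then show ?thesis by (simp add: zero_less_mult_iff)
qed

lemma seqC_le_1:
  assumes "a \<in> seqC"
  shows "a k \<le> 1"
proof (cases "k = 0")
  case True
  then show ?thesis using assms by (simp add: seqC_def)
next
  case False
  then have "(4::real) \<le> 4 ^ k"
    using power_increasing[of 1 k "4::real"] by simp
  then have "a k * 4 \<le> a k * 4 ^ k"
    using seqC_pos[OF assms] by simp
  then show ?thesis using seqC_bounds[OF assms, of k] by linarith
qed

lemma seqC_eq_imp_index_eq:
  assumes "a \<in> seqC" "b \<in> seqC" "a i = b j"
  shows "i = j"
proof -
  have not_less: "\<not> i < j" if "a \<in> seqC" "b \<in> seqC" "a i = b j" for a b :: "nat \<Rightarrow> real" and i j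
  proof
    assume "i < j"
    then have "(4::real) ^ i * 4 \<le> 4 ^ j"
      using power_increasing[of "Suc i" j "4::real"] by simp
    then have "a i * 4 ^ i * 4 \<le> b j * 4 ^ j"
      using seqC_pos[OF that(1), of i] that(3) by (simp add: mult.assoc)
    then show False
      using seqC_bounds[OF that(1), of i] seqC_bounds[OF that(2), of j] that(3) by linarith
  qed
  show ?thesis
    using not_less[OF assms] not_less[OF assms(2,1) assms(3) [symmetric]] by simp
qed

lemma isometric_trees_scale_le:
  assumes "a \<in> seqC" "b \<in> seqC" "K > 0" "L > 0"
    and "isometric_spaces Upsilon (\<lambda>p q. K * R a p q) Upsilon (\<lambda>p q. L * R b p q)"
  shows "K \<le> L"
proof -
  obtain j where "K * a 0 = L * b j"
    using isometric_trees_edge_lengths[OF seqC_pos[OF assms(1)] seqC_pos[OF assms(2)] assms(3-5)]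
    by blast
  then have "K = L * b j" using \<open>a \<in> seqC\<close> by (simp add: seqC_def)
  also have "\<dots> \<le> L"
    using mult_left_le[OF seqC_le_1[OF assms(2)] less_imp_le[OF assms(4)]] .
  finally show ?thesis .
qed

theorem proposition2p5:
  fixes a b :: "nat \<Rightarrow> real" and K L :: real
  assumes "a \<in> seqC" and "b \<in> seqC" and "K > 0" and "L > 0"
    and "isometric_spaces Upsilon (\<lambda>p q. K * R a p q) Upsilon (\<lambda>p q. L * R b p q)"
  shows "a = b"
proof
  have "K = L"
    using isometric_trees_scale_le[OF assms]
      isometric_trees_scale_le[OF assms(2,1,4,3) isometric_spaces_sym[OF assms(5)]]
    by simp
  fix i
  obtain j where "K * a i = L * b j"
    using isometric_trees_edge_lengths[OF seqC_pos[OF assms(1)] seqC_pos[OF assms(2)] assms(3-5)]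
    by blast
  then have "a i = b j" using \<open>K = L\<close> \<open>L > 0\<close> by simp
  moreover from this have "i = j" by (rule seqC_eq_imp_index_eq[OF assms(1,2)])
  ultimately show "a i = b i" by simp
qed

end
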